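(* Let $n\ge1$ and let $\mathfrak{c}=\{c_{ij}\}_{1\le i<j\le n}$, $\mathfrak{\ell}=\{\ell_1,\dots,\ell_n\}$ be integers. If the Grossberg–Karshon twisted cube $(C(\mathfrak{c},\mathfrak{\ell}),\rho)$ is untwisted, then $\ell_i\ge0$ for all $1\le i\le n$.
   Context: $A_n(x)=\ell_n$, $A_j(x)=\ell_j-\sum_{k=j+1}^nc_{jk}x_k$ for $1\le j\le n-1$. $C(\mathfrak{c},\mathfrak{\ell})=\{x\in\mathbb{R}^n:$ for each $1\le k\le n$, $A_k(x)<x_k<0$ or $0\le x_k\le A_k(x)\}$; $\rho(x)=(-1)^n\prod_k\mathrm{sgn}(x_k)$ on $C(\mathfrak{c},\mathfrak{\ell})$, $0$ elsewhere ($\mathrm{sgn}(t)=1$ for $t<0$, $-1$ for $t\ge0$). The twisted cube is untwisted if $C(\mathfrak{c},\mathfrak{\ell})$ is closed in $\mathbb{R}^n$ (equivalently, $C(\mathfrak{c},\mathfrak{\ell})=\{x:0\le x_j\le A_j(x)\ \forall j\}$). *)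

theory Defs
  imports "HOL-Analysis.Analysis"
begin

text \<open>Points of R^n are represented as functions nat => real that vanish outside
  the index range {1..n}; nat => real carries the product topology, and the
  subspace of functions vanishing outside {1..n} is closed and homeomorphic to R^n.\<close>

definition gk_A :: "(nat \<Rightarrow> nat \<Rightarrow> int) \<Rightarrow> (nat \<Rightarrow> int) \<Rightarrow> nat \<Rightarrow> nat \<Rightarrow> (nat \<Rightarrow> real) \<Rightarrow> real" where
  "gk_A c l n j x = real_of_int (l j) - (\<Sum>k\<in>{j+1..n}. real_of_int (c j k) * x k)"

definition gk_C :: "(nat \<Rightarrow> nat \<Rightarrow> int) \<Rightarrow> (nat \<Rightarrow> int) \<Rightarrow> nat \<Rightarrow> (nat \<Rightarrow> real) set" where
  "gk_C c l n = {x. (\<forall>k. k \<notin> {1..n} \<longrightarrow> x k = 0) \<and>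
      (\<forall>k\<in>{1..n}. (gk_A c l n k x < x k \<and> x k < 0) \<or> (0 \<le> x k \<and> x k \<le> gk_A c l n k x))}"

definition gk_untwisted :: "(nat \<Rightarrow> nat \<Rightarrow> int) \<Rightarrow> (nat \<Rightarrow> int) \<Rightarrow> nat \<Rightarrow> bool" where
  "gk_untwisted c l n \<longleftrightarrow> closed (gk_C c l n)"

end

theory Submission
  imports Defs
begin

text \<open>Let \<open>i\<close> be the largest index with \<open>\<ell>\<^sub>i < 0\<close>. Fix \<open>x\<^sub>k = 0\<close> for \<open>k > i\<close>, so that
  \<open>A\<^sub>i = \<ell>\<^sub>i\<close>, let \<open>x\<^sub>i = s\<close>, and fill in the coordinates below \<open>i\<close> from the top down by
  \<open>x\<^sub>k = min(A\<^sub>k(x), 0)/2\<close>, which satisfies the \<open>k\<close>-th condition of the cube whatever the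
  sign of \<open>A\<^sub>k(x)\<close>. This gives a continuous path \<open>s \<mapsto> x(s)\<close> that lies in the cube exactly
  for \<open>s \<in> (\<ell>\<^sub>i, 0)\<close>; since this interval is not closed, neither is the cube.\<close>

lemma gk_A_cong:
  assumes "\<And>k. j < k \<Longrightarrow> x k = y k"
  shows "gk_A c l n j x = gk_A c l n j y"
  unfolding gk_A_def using assms by (intro arg_cong2[where f="(-)"] refl sum.cong) auto

text \<open>After \<open>d\<close> steps the coordinates \<open>i - d, \<dots>, i\<close> have been filled in.\<close>

primrec gk_fill :: "(nat \<Rightarrow> nat \<Rightarrow> int) \<Rightarrow> (nat \<Rightarrow> int) \<Rightarrow> nat \<Rightarrow> nat \<Rightarrow> real \<Rightarrow> nat \<Rightarrow> nat \<Rightarrow> real" where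
  "gk_fill c l n i s 0 = (\<lambda>k. if k = i then s else 0)"
| "gk_fill c l n i s (Suc d) = (let x = gk_fill c l n i s d in
      if Suc d < i then x(i - Suc d := min (gk_A c l n (i - Suc d) x) 0 / 2) else x)"

lemma gk_fill_eq_0: "k \<noteq> i \<Longrightarrow> i < k \<or> k = 0 \<Longrightarrow> gk_fill c l n i s d k = 0"
  by (induction d) (auto simp: Let_def)

lemma gk_fill_at_top: "gk_fill c l n i s d i = s"
  by (induction d) (auto simp: Let_def)

lemma gk_fill_stable: "i - d \<le> k \<Longrightarrow> gk_fill c l n i s (d + e) k = gk_fill c l n i s d k"
  by (induction e) (auto simp: Let_def)

lemma gk_fill_below:
  assumes "1 \<le> j" "j < i"
  shows "gk_fill c l n i s (i - 1) j = min (gk_A c l n j (gk_fill c l n i s (i - 1))) 0 / 2"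
proof -
  define d where "d = i - Suc j"
  have jd: "j = i - Suc d" "Suc d < i"
    using assms by (auto simp: d_def)
  have split: "i - 1 = Suc d + (i - 1 - Suc d)"
    using jd by auto
  have final: "gk_fill c l n i s (i - 1) k = gk_fill c l n i s (Suc d) k" if "j \<le> k" for k
    using that jd by (subst split, intro gk_fill_stable) auto
  have "gk_fill c l n i s (Suc d) j = min (gk_A c l n j (gk_fill c l n i s d)) 0 / 2"
    using jd by (simp add: Let_def)
  also have "gk_A c l n j (gk_fill c l n i s d) = gk_A c l n j (gk_fill c l n i s (Suc d))"
    using jd by (intro gk_A_cong) (auto simp: Let_def)
  also have "\<dots> = gk_A c l n j (gk_fill c l n i s (i - 1))"
    using final by (intro gk_A_cong) simp
  finally show ?thesis
    using final by simp
qed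

lemma continuous_on_gk_fill: "continuous_on UNIV (\<lambda>s. gk_fill c l n i s d)"
proof (intro continuous_on_coordinatewise_then_product)
  fix k
  show "continuous_on UNIV (\<lambda>s. gk_fill c l n i s d k)"
  proof (induction d arbitrary: k)
    case 0
    show ?case by (cases "k = i") (auto intro!: continuous_intros)
  next
    case (Suc d)
    have A: "continuous_on UNIV (\<lambda>s. gk_A c l n j (gk_fill c l n i s d))" for j
      unfolding gk_A_def by (intro continuous_intros Suc.IH)
    show ?case
    proof (cases "Suc d < i \<and> k = i - Suc d")
      case True
      then show ?thesis
        by (simp add: Let_def, intro continuous_intros A, simp)
    next
      case False
      then have "(\<lambda>s. gk_fill c l n i s (Suc d) k) = (\<lambda>s. gk_fill c l n i s d k)"
        by (auto simp: Let_def)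
      then show ?thesis
        using Suc.IH by metis
    qed
  qed
qed

lemma gk_fill_in_gk_C_iff:
  assumes "1 \<le> i" "i \<le> n" and above: "\<And>k. i < k \<Longrightarrow> k \<le> n \<Longrightarrow> 0 \<le> l k"
  shows "gk_fill c l n i s (i - 1) \<in> gk_C c l n \<longleftrightarrow> (l i < s \<and> s < 0) \<or> (0 \<le> s \<and> s \<le> l i)"
    (is "?x \<in> _ \<longleftrightarrow> _")
proof -
  define ok where "ok k \<longleftrightarrow>
      (gk_A c l n k ?x < ?x k \<and> ?x k < 0) \<or> (0 \<le> ?x k \<and> ?x k \<le> gk_A c l n k ?x)" for k
  have zero: "?x k = 0" if "i < k \<or> k = 0" for k
    using that assms(1) by (intro gk_fill_eq_0) auto
  have A_top: "gk_A c l n k ?x = l k" if "i \<le> k" for k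
    unfolding gk_A_def using zero that by simp
  have lower: "ok k" if "1 \<le> k" "k < i" for k
    using gk_fill_below[OF that, of c l n s] unfolding ok_def
    by (cases "gk_A c l n k ?x < 0") auto
  have higher: "ok k" if "i < k" "k \<le> n" for k
    using zero A_top above that unfolding ok_def by auto
  have "?x \<in> gk_C c l n \<longleftrightarrow> (\<forall>k\<in>{1..n}. ok k)"
    unfolding gk_C_def ok_def using zero assms(2) by auto
  also have "\<dots> \<longleftrightarrow> ok i"
    using assms(1,2) lower higher by (metis atLeastAtMost_iff linorder_neqE_nat)
  finally show ?thesis
    using A_top[of i] by (simp add: ok_def gk_fill_at_top)
qed

lemma untwisted_nonneg_below:
  assumes "gk_untwisted c l n" "1 \<le> i" "i \<le> n" "\<And>k. i < k \<Longrightarrow> k \<le> n \<Longrightarrow> 0 \<le> l k"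
  shows "0 \<le> l i"
proof (rule ccontr)
  assume neg: "\<not> 0 \<le> l i"
  have "closed ((\<lambda>s. gk_fill c l n i s (i - 1)) -` gk_C c l n)"
    using assms(1) continuous_on_gk_fill unfolding gk_untwisted_def
    by (intro continuous_closed_vimage) (auto simp: continuous_on_eq_continuous_at)
  also have "(\<lambda>s. gk_fill c l n i s (i - 1)) -` gk_C c l n = {real_of_int (l i)<..<0}"
    using gk_fill_in_gk_C_iff[OF assms(2-4)] neg by auto
  finally have "{real_of_int (l i)<..<0} = {real_of_int (l i)..0}"
    using neg closure_greaterThanLessThan[of "real_of_int (l i)" 0] by (simp add: closure_closed)
  then have "real_of_int (l i) \<in> {real_of_int (l i)<..<0}"
    using neg by simp
  then show False
    by simp
qed

theorem lemma3p1:
  fixes c :: "nat \<Rightarrow> nat \<Rightarrow> int" and l :: "nat \<Rightarrow> int" and n :: nat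
  assumes "n \<ge> 1"
    and "gk_untwisted c l n"
  shows "\<forall>i\<in>{1..n}. l i \<ge> 0"
proof (rule ccontr)
  assume "\<not> (\<forall>i\<in>{1..n}. l i \<ge> 0)"
  then have neg: "{i\<in>{1..n}. l i < 0} \<noteq> {}"
    by auto
  define i where "i = Max {i\<in>{1..n}. l i < 0}"
  have i: "1 \<le> i" "i \<le> n" "l i < 0"
    using Max_in[OF _ neg] by (auto simp: i_def)
  have "0 \<le> l k" if "i < k" "k \<le> n" for k
    using Max_ge[of "{i\<in>{1..n}. l i < 0}" k] that i by (fastforce simp: i_def)
  then show False
    using untwisted_nonneg_below[OF assms(2) i(1,2)] i(3) by auto
qed

end
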